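(* Let $G=(V,E)$ be a graph with edge weights, let $V_{cover}\subseteq V$ be a vertex cover of $G$, and let $G'$ be the subgraph consisting of all edges of $G$ between vertices of $V_{cover}$ together with, for each vertex $u\in V_{cover}$, the $|V_{cover}|+1$ maximum weight edges from $u$ to vertices in $V\setminus V_{cover}$ (all such edges if there are fewer). If $M'$ is a $(1+\epsilon)$-approximate maximum weight matching in $G'$, then it is also a $(1+\epsilon)$-approximate maximum weight matching in $G$.
   Context: A vertex cover is a set of vertices containing at least one endpoint of every edge. For a matching $M$, $w(M)=\sum_{e\in M}w(e)$; $M$ is a $(1+\epsilon)$-approximate maximum weight matching of $H$ if $w(M)\ge\frac{1}{1+\epsilon}$ times the maximum weight of a matching of $H$. *)

theory Defs
  imports Complex_Main
begin

definition graph :: "'a set \<Rightarrow> 'a set set \<Rightarrow> bool" where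
  "graph V E \<longleftrightarrow> finite V \<and> (\<forall>e\<in>E. \<exists>x y. x \<in> V \<and> y \<in> V \<and> x \<noteq> y \<and> e = {x, y})"

definition vertex_cover :: "'a set set \<Rightarrow> 'a set \<Rightarrow> bool" where
  "vertex_cover E C \<longleftrightarrow> (\<forall>e\<in>E. e \<inter> C \<noteq> {})"

definition matching :: "'a set set \<Rightarrow> 'a set set \<Rightarrow> bool" where
  "matching E M \<longleftrightarrow> M \<subseteq> E \<and> (\<forall>e1\<in>M. \<forall>e2\<in>M. e1 \<noteq> e2 \<longrightarrow> e1 \<inter> e2 = {})"

definition weight :: "('a set \<Rightarrow> real) \<Rightarrow> 'a set set \<Rightarrow> real" where
  "weight w M = (\<Sum>e\<in>M. w e)"

text \<open>Maximum weight of a matching (the empty matching is always a matching).\<close>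
definition max_matching_weight :: "'a set set \<Rightarrow> ('a set \<Rightarrow> real) \<Rightarrow> real" where
  "max_matching_weight E w = Max {weight w M | M. matching E M}"

definition approx_max_matching ::
  "real \<Rightarrow> 'a set set \<Rightarrow> ('a set \<Rightarrow> real) \<Rightarrow> 'a set set \<Rightarrow> bool" where
  "approx_max_matching eps E w M \<longleftrightarrow>
     matching E M \<and> weight w M \<ge> max_matching_weight E w / (1 + eps)"

definition out_edges :: "'a set set \<Rightarrow> 'a set \<Rightarrow> 'a \<Rightarrow> 'a set set" where
  "out_edges E C u = {e \<in> E. u \<in> e \<and> \<not> e \<subseteq> C}"

definition top_selection ::
  "'a set set \<Rightarrow> ('a set \<Rightarrow> real) \<Rightarrow> 'a set \<Rightarrow> ('a \<Rightarrow> 'a set set) \<Rightarrow> bool" where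
  "top_selection E w C S \<longleftrightarrow>
     (\<forall>u\<in>C. S u \<subseteq> out_edges E C u
        \<and> card (S u) = min (card C + 1) (card (out_edges E C u))
        \<and> (\<forall>e\<in>S u. \<forall>f\<in>out_edges E C u - S u. w f \<le> w e))"

definition sparsified :: "'a set set \<Rightarrow> 'a set \<Rightarrow> ('a \<Rightarrow> 'a set set) \<Rightarrow> 'a set set" where
  "sparsified E C S = {e \<in> E. e \<subseteq> C} \<union> (\<Union>u\<in>C. S u)"

end

theory Submission
  imports Defs
begin

text \<open>Take a maximum weight matching \<open>M\<close> of \<open>G\<close> and an edge \<open>e = {u, y}\<close> of \<open>M\<close> missing from
  \<open>G'\<close>, with \<open>u\<close> in the cover \<open>C\<close>. Then \<open>u\<close> keeps \<open>|C| + 1\<close> edges to \<open>V - C\<close>, all at least as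
  heavy as \<open>e\<close>. Each other edge of \<open>M\<close> has at most one endpoint outside \<open>C\<close> and, avoiding \<open>u\<close>,
  contains a cover vertex other than \<open>u\<close>; so these edges block at most \<open>|C| - 1\<close> of the kept
  edges of \<open>u\<close>, and \<open>e\<close> can be exchanged for a free one without losing weight. Repeating,
  \<open>M\<close> is moved into \<open>G'\<close>, so both graphs have the same maximum matching weight.\<close>

lemma graph_finite_edges: "graph V E \<Longrightarrow> finite E"
  unfolding graph_def by (rule finite_subset[of E "Pow V"]) auto

lemma matching_finite: "finite E \<Longrightarrow> matching E M \<Longrightarrow> finite M"
  unfolding matching_def by (auto intro: finite_subset)

lemma matching_mono: "E \<subseteq> E' \<Longrightarrow> matching E M \<Longrightarrow> matching E' M"
  unfolding matching_def by auto

lemma matching_disjoint: "matching E M \<Longrightarrow> g \<in> M \<Longrightarrow> h \<in> M \<Longrightarrow> g \<noteq> h \<Longrightarrow> g \<inter> h = {}"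
  unfolding matching_def by auto

lemma card_matching_le_vertex_cover:
  assumes "matching E M" and "vertex_cover M C" and "finite C"
  shows "card M \<le> card C"
proof -
  have "\<forall>g\<in>M. \<exists>x. x \<in> g \<inter> C" using assms(2) unfolding vertex_cover_def by blast
  then obtain c where c: "\<And>g. g \<in> M \<Longrightarrow> c g \<in> g \<inter> C" by (auto dest!: bchoice)
  have "inj_on c M"
  proof (rule inj_onI)
    fix g h assume "g \<in> M" "h \<in> M" "c g = c h"
    then have "g \<inter> h \<noteq> {}" using c by (metis IntD1 disjoint_iff)
    then show "g = h" using matching_disjoint[OF assms(1) \<open>g \<in> M\<close> \<open>h \<in> M\<close>] by blast
  qed
  moreover have "c ` M \<subseteq> C" using c by auto
  ultimately show ?thesis using assms(3) by (rule card_inj_on_le)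
qed

lemma card_edge_outside_vertex_cover:
  assumes "graph V E" and "vertex_cover E C" and "g \<in> E"
  shows "card (g - C) \<le> 1"
proof -
  obtain x y where g: "g = {x, y}" using assms(1,3) unfolding graph_def by blast
  have "x \<in> C \<or> y \<in> C" using assms(2,3) g unfolding vertex_cover_def by auto
  then have "g - C \<subseteq> {x} \<or> g - C \<subseteq> {y}" using g by auto
  then show ?thesis using card_mono[of "{x}" "g - C"] card_mono[of "{y}" "g - C"] by auto
qed

lemma card_Union_outside_vertex_cover:
  assumes "graph V E" and "vertex_cover E C" and "N \<subseteq> E" and "finite N"
  shows "card (\<Union>N - C) \<le> card N"
proof -
  have "card (\<Union>N - C) = card (\<Union>g\<in>N. g - C)" by (rule arg_cong[where f = card]) blast
  also have "\<dots> \<le> (\<Sum>g\<in>N. card (g - C))" using assms(4) by (rule card_UN_le)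
  also have "\<dots> \<le> (\<Sum>g\<in>N. 1)"
    using card_edge_outside_vertex_cover[OF assms(1,2)] assms(3) by (intro sum_mono) auto
  finally show ?thesis by simp
qed

lemma out_edge_shape:
  assumes "graph V E" and "u \<in> C" and "f \<in> out_edges E C u"
  shows "\<exists>y. y \<notin> C \<and> f = {u, y}"
proof -
  obtain a b where "f = {a, b}" using assms(1,3) unfolding graph_def out_edges_def by blast
  then show ?thesis using assms(2,3) unfolding out_edges_def by auto
qed

text \<open>Already \<open>card C\<close> edges cannot all be blocked: the matching is covered by \<open>C - {u}\<close>, so it
  has fewer than \<open>card C\<close> edges, each with at most one endpoint outside \<open>C\<close>.\<close>

lemma out_edge_avoiding_matching:
  assumes G: "graph V E" and VC: "vertex_cover E C" and "finite C" and u: "u \<in> C"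
    and N: "matching E N" and uN: "u \<notin> \<Union>N"
    and F: "F \<subseteq> out_edges E C u" and cardF: "card C \<le> card F"
  shows "\<exists>f\<in>F. \<forall>g\<in>N. f \<inter> g = {}"
proof (rule ccontr)
  assume "\<not> ?thesis"
  then have blocked: "F \<subseteq> (\<lambda>y. {u, y}) ` (\<Union>N - C)"
    using out_edge_shape[OF G u] F uN by fastforce
  have NE: "N \<subseteq> E" and "finite N"
    using N matching_finite[OF graph_finite_edges[OF G]] unfolding matching_def by auto
  have "vertex_cover N (C - {u})"
    using VC NE uN unfolding vertex_cover_def by blast
  have "finite (\<Union>N - C)"
    using \<open>finite N\<close> G NE unfolding graph_def by (intro finite_Diff finite_Union) force+
  have "card F \<le> card ((\<lambda>y. {u, y}) ` (\<Union>N - C))"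
    using card_mono[OF finite_imageI[OF \<open>finite (\<Union>N - C)\<close>] blocked] .
  also have "\<dots> \<le> card (\<Union>N - C)" by (rule card_image_le[OF \<open>finite (\<Union>N - C)\<close>])
  also have "\<dots> \<le> card N" by (rule card_Union_outside_vertex_cover[OF G VC NE \<open>finite N\<close>])
  also have "\<dots> \<le> card (C - {u})"
    using card_matching_le_vertex_cover N \<open>vertex_cover N (C - {u})\<close> \<open>finite C\<close> by blast
  also have "\<dots> < card C" using u \<open>finite C\<close> by (rule card_Diff1_less[rotated])
  finally show False using cardF by simp
qed

lemma top_selection_complete_if_missing:
  assumes "finite E" and "top_selection E w C S" and "u \<in> C"
    and "e \<in> out_edges E C u" and "e \<notin> S u"
  shows "card (S u) = card C + 1"
proof -
  have Su: "S u \<subseteq> out_edges E C u"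
    and "card (S u) = min (card C + 1) (card (out_edges E C u))"
    using assms(2,3) unfolding top_selection_def by auto
  moreover have "card (S u) < card (out_edges E C u)"
    using Su assms(1,4,5) unfolding out_edges_def by (intro psubset_card_mono) auto
  ultimately show ?thesis by linarith
qed

lemma sparsified_subset: "top_selection E w C S \<Longrightarrow> sparsified E C S \<subseteq> E"
  unfolding sparsified_def top_selection_def out_edges_def by auto

lemma sparsified_exchange:
  assumes G: "graph V E" and CV: "C \<subseteq> V" and VC: "vertex_cover E C"
    and TS: "top_selection E w C S" and M: "matching E M" and eM: "e \<in> M - sparsified E C S"
  shows "\<exists>f\<in>sparsified E C S. f \<notin> M \<and> w e \<le> w f \<and> matching E (insert f (M - {e}))"
proof -
  have e: "e \<in> M" "e \<notin> sparsified E C S" using eM by auto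
  have "e \<in> E" using M e unfolding matching_def by auto
  then obtain u where u: "u \<in> C" "u \<in> e" using VC unfolding vertex_cover_def by auto
  have e_out: "e \<in> out_edges E C u" and eSu: "e \<notin> S u"
    using \<open>e \<in> E\<close> u e(2) unfolding sparsified_def out_edges_def by auto
  have Su: "S u \<subseteq> out_edges E C u"
    and heaviest: "\<forall>f\<in>S u. w e \<le> w f"
    using TS u e_out eSu unfolding top_selection_def by auto
  have "finite C" using G CV unfolding graph_def by (auto intro: finite_subset)
  have "u \<notin> \<Union>(M - {e})" using matching_disjoint[OF M] e(1) u(2) by blast
  moreover have "matching E (M - {e})" using M unfolding matching_def by auto
  moreover have "card C \<le> card (S u)"
    using top_selection_complete_if_missing[OF graph_finite_edges[OF G] TS u(1) e_out eSu] by simp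
  ultimately obtain f where f: "f \<in> S u" and free: "\<forall>g\<in>M - {e}. f \<inter> g = {}"
    using out_edge_avoiding_matching[OF G VC \<open>finite C\<close> u(1) _ _ Su] by blast
  have "f \<in> E" "f \<noteq> {}" using f Su unfolding out_edges_def by auto
  have "f \<notin> M" using free f eSu \<open>f \<noteq> {}\<close> by auto
  moreover have "matching E (insert f (M - {e}))"
    using M \<open>f \<in> E\<close> free unfolding matching_def by blast
  moreover have "f \<in> sparsified E C S" using f u(1) unfolding sparsified_def by auto
  ultimately show ?thesis using heaviest f by blast
qed

lemma matching_dominated_by_exchange:
  assumes "finite E"
    and exchange: "\<And>M e. matching E M \<Longrightarrow> e \<in> M - E' \<Longrightarrow>
       \<exists>f\<in>E'. f \<notin> M \<and> w e \<le> w f \<and> matching E (insert f (M - {e}))"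
    and "matching E M"
  shows "\<exists>M'. matching (E \<inter> E') M' \<and> weight w M \<le> weight w M'"
  using assms(3)
proof (induction "card (M - E')" arbitrary: M rule: less_induct)
  case less
  have "finite M" using matching_finite[OF assms(1) less.prems] .
  show ?case
  proof (cases "M \<subseteq> E'")
    case True
    then show ?thesis using less.prems unfolding matching_def by auto
  next
    case False
    then obtain e where e: "e \<in> M - E'" by auto
    then obtain f where f: "f \<in> E'" "f \<notin> M" "w e \<le> w f"
      and M1: "matching E (insert f (M - {e}))"
      using exchange[OF less.prems] by blast
    have "insert f (M - {e}) - E' = (M - E') - {e}" using f(1) by auto
    then have "card (insert f (M - {e}) - E') < card (M - E')"
      using card_Diff1_less[of "M - E'" e] e \<open>finite M\<close> by simp
    then obtain M' where M': "matching (E \<inter> E') M'" "weight w (insert f (M - {e})) \<le> weight w M'"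
      using less.hyps M1 by blast
    have "weight w M = weight w (M - {e}) + w e"
      unfolding weight_def using \<open>finite M\<close> e by (simp add: sum.remove add.commute)
    also have "\<dots> \<le> weight w (insert f (M - {e}))"
      unfolding weight_def using \<open>finite M\<close> f(2,3) by simp
    finally show ?thesis using M' by auto
  qed
qed

lemma finite_matching_weights: "finite E \<Longrightarrow> finite {weight w M | M. matching E M}"
  by (rule finite_subset[of _ "weight w ` Pow E"]) (auto simp: matching_def)

lemma weight_le_max_matching_weight:
  "finite E \<Longrightarrow> matching E M \<Longrightarrow> weight w M \<le> max_matching_weight E w"
  unfolding max_matching_weight_def by (auto intro: Max_ge finite_matching_weights)

lemma max_matching_weight_attained:
  assumes "finite E"
  obtains M where "matching E M" and "max_matching_weight E w = weight w M"
proof -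
  have "matching E {}" unfolding matching_def by simp
  then have "max_matching_weight E w \<in> {weight w M | M. matching E M}"
    unfolding max_matching_weight_def
    by (intro Max_in finite_matching_weights[OF assms]) auto
  then show ?thesis using that by auto
qed

lemma approx_max_matching_transfer:
  assumes "finite E" and "E' \<subseteq> E" and "0 \<le> 1 + eps"
    and dominated: "\<And>M. matching E M \<Longrightarrow> \<exists>M'. matching E' M' \<and> weight w M \<le> weight w M'"
    and "approx_max_matching eps E' w M"
  shows "approx_max_matching eps E w M"
proof -
  obtain M0 where M0: "matching E M0" "max_matching_weight E w = weight w M0"
    using max_matching_weight_attained[OF assms(1)] .
  obtain M' where "matching E' M'" "weight w M0 \<le> weight w M'" using dominated[OF M0(1)] by blast
  moreover have "weight w M' \<le> max_matching_weight E' w"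
    using weight_le_max_matching_weight[OF finite_subset[OF assms(2,1)] \<open>matching E' M'\<close>] .
  ultimately have "max_matching_weight E w \<le> max_matching_weight E' w" using M0(2) by linarith
  then have "max_matching_weight E w / (1 + eps) \<le> max_matching_weight E' w / (1 + eps)"
    using assms(3) by (simp add: divide_right_mono)
  then show ?thesis
    using assms(5) matching_mono[OF assms(2)] unfolding approx_max_matching_def by auto
qed

theorem lemma15:
  fixes V :: "'a set" and E :: "'a set set" and w :: "'a set \<Rightarrow> real"
    and C :: "'a set" and S :: "'a \<Rightarrow> 'a set set" and M' :: "'a set set" and eps :: real
  assumes "graph V E"
    and "C \<subseteq> V" and "vertex_cover E C"
    and "top_selection E w C S"
    and "eps > 0"
    and "approx_max_matching eps (sparsified E C S) w M'"
  shows "approx_max_matching eps E w M'"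
proof -
  have "finite E" using assms(1) by (rule graph_finite_edges)
  have sub: "sparsified E C S \<subseteq> E" using assms(4) by (rule sparsified_subset)
  then have restrict: "E \<inter> sparsified E C S = sparsified E C S" by blast
  have "\<exists>M2. matching (sparsified E C S) M2 \<and> weight w M \<le> weight w M2" if "matching E M" for M
    using matching_dominated_by_exchange[OF \<open>finite E\<close> sparsified_exchange[OF assms(1-4)] that]
    unfolding restrict .
  then show ?thesis
    using approx_max_matching_transfer[OF \<open>finite E\<close> sub _ _ assms(6)] assms(5) by simp
qed

end
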